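(* Let $P=\sum_{|\nu|\le d}a_\nu X^\nu\in\mathbb{C}[X_1,\dots,X_n]_{int}$ with $a_\nu\in{}^*\mathbb{C}$ and $d\in{}^*\mathbb{N}$ infinite. Then $P$ is absolutely bounded if and only if (i) $a_\nu\in{}^b\mathbb{C}$ for every $\nu\in\mathbb{N}^n$ (i.e. $|\nu|$ finite), and (ii) $|a_\nu|^{1/|\nu|}\in{}^i\mathbb{C}$ for every $\nu$ with $|\nu|$ infinite and $|\nu|\le d$.
   Context: ${}^*\mathbb{C}$ is an ultrapower of $\mathbb{C}$ by a nonprincipal ultrafilter; ${}^b\mathbb{C}$ (resp. ${}^i\mathbb{C}$) denotes the elements $z$ with $|z|\le r$ for some standard real $r$ (resp. $|z|<r$ for every standard real $r>0$); ${}^*\mathbb{N}$ is the corresponding extension of $\mathbb{N}$. For finite $n$, $\mathbb{C}[X_1,\dots,X_n]_{int}$ is the ultrapower of $\mathbb{C}[X_1,\dots,X_n]$ (internal polynomials); each is written uniquely as $\sum_{|\nu|\le d}a_\nu X^\nu$ over multi-indices $\nu\in{}^*\mathbb{N}^n$ and is viewed as an internal function ${}^*\mathbb{C}^n\to{}^*\mathbb{C}$. $|P|:=\sum_{|\nu|\le d}|a_\nu|X^\nu$. $P$ is absolutely bounded if $|P|({}^b\mathbb{C}^n)\subset{}^b\mathbb{C}$. *)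

theory Defs
  imports "HOL-Analysis.Analysis"
begin

text \<open>Ultrapowers are modelled by index families \<open>'i \<Rightarrow> _\<close> taken modulo an
ultrafilter \<open>U\<close> on the index type \<open>'i\<close>.\<close>

definition ultrafilter :: "'i filter \<Rightarrow> bool" where
  "ultrafilter U \<longleftrightarrow> U \<noteq> bot \<and> (\<forall>P. eventually P U \<or> eventually (\<lambda>x. \<not> P x) U)"

definition nonprincipal :: "'i filter \<Rightarrow> bool" where
  "nonprincipal U \<longleftrightarrow> (\<forall>j. \<not> eventually (\<lambda>x. x = j) U)"

definition limited :: "'i filter \<Rightarrow> ('i \<Rightarrow> complex) \<Rightarrow> bool" where
  "limited U z \<longleftrightarrow> (\<exists>r::real. eventually (\<lambda>i. norm (z i) \<le> r) U)"

definition infinitesimal :: "'i filter \<Rightarrow> ('i \<Rightarrow> complex) \<Rightarrow> bool" where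
  "infinitesimal U z \<longleftrightarrow> (\<forall>r::real. r > 0 \<longrightarrow> eventually (\<lambda>i. norm (z i) < r) U)"

definition hyp_infinite :: "'i filter \<Rightarrow> ('i \<Rightarrow> nat) \<Rightarrow> bool" where
  "hyp_infinite U d \<longleftrightarrow> (\<forall>N::nat. eventually (\<lambda>i. N < d i) U)"

definition mlen :: "('n::finite \<Rightarrow> nat) \<Rightarrow> nat" where
  "mlen \<nu> = (\<Sum>k\<in>UNIV. \<nu> k)"

text \<open>The internal polynomial \<open>|P| = \<Sum>_{|\<nu>|\<le>d} |a_\<nu>| X^\<nu>\<close>, evaluated at an internal
point \<open>z \<in> *\<complex>^n\<close>, componentwise in the index.\<close>
definition abs_poly_eval ::
  "('i \<Rightarrow> ('n::finite \<Rightarrow> nat) \<Rightarrow> complex) \<Rightarrow> ('i \<Rightarrow> nat) \<Rightarrow> ('i \<Rightarrow> 'n \<Rightarrow> complex) \<Rightarrow> 'i \<Rightarrow> complex" where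
  "abs_poly_eval a d z i =
     (\<Sum>\<nu>\<in>{\<nu>::'n \<Rightarrow> nat. mlen \<nu> \<le> d i}.
        complex_of_real (norm (a i \<nu>)) * (\<Prod>k\<in>UNIV. z i k ^ \<nu> k))"

definition abs_bounded ::
  "'i filter \<Rightarrow> ('i \<Rightarrow> ('n::finite \<Rightarrow> nat) \<Rightarrow> complex) \<Rightarrow> ('i \<Rightarrow> nat) \<Rightarrow> bool" where
  "abs_bounded U a d \<longleftrightarrow>
     (\<forall>z::'i \<Rightarrow> 'n \<Rightarrow> complex. (\<forall>k. limited U (\<lambda>i. z i k)) \<longrightarrow> limited U (abs_poly_eval a d z))"

end

theory Submission
  imports Defs
begin

text \<open>If \<open>|P|\<close> is bounded on \<open>\<^sup>b\<complex>\<^sup>n\<close>, evaluating it at the constant points \<open>1\<close> and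
\<open>2/r\<close> bounds each single term: this gives (i), and \<open>|a\<^sub>\<nu>| \<ge> r\<^bsup>|\<nu>|\<^esup>\<close> with \<open>|\<nu>|\<close> infinite
would make \<open>|P|(2/r) \<ge> 2\<^bsup>|\<nu>|\<^esup>\<close> infinite, which gives (ii). Conversely, (ii) implies by
overspill that for every standard \<open>r > 0\<close> there is a standard \<open>N\<close> with \<open>|a\<^sub>\<nu>| < r\<^bsup>|\<nu>|\<^esup>\<close>
whenever \<open>N \<le> |\<nu>| \<le> d\<close>. At a point of norm at most \<open>R\<close>, taking \<open>r = 1/(2R)\<close>, the
terms of \<open>|P|\<close> with \<open>|\<nu>| \<ge> N\<close> are dominated by a geometric series bounded by
\<open>2\<^bsup>n\<^esup>\<close>, and the finitely many remaining terms are limited by (i).\<close>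

lemma component_le_mlen: "\<nu> k \<le> mlen (\<nu>::'n::finite \<Rightarrow> nat)"
  unfolding mlen_def by (rule member_le_sum) auto

lemma mlen_le_subset_PiE: "{\<nu>::'n::finite \<Rightarrow> nat. mlen \<nu> \<le> D} \<subseteq> PiE UNIV (\<lambda>_. {..D})"
  using component_le_mlen by (fastforce simp: PiE_def extensional_def intro: order_trans)

lemma finite_mlen_le: "finite {\<nu>::'n::finite \<Rightarrow> nat. mlen \<nu> \<le> D}"
  by (rule finite_subset[OF mlen_le_subset_PiE]) (simp add: finite_PiE)

lemma prod_power_mlen: "(\<Prod>k\<in>UNIV. (c::'a::comm_monoid_mult) ^ \<nu> k) = c ^ mlen \<nu>"
  unfolding mlen_def by (simp add: power_sum)

lemma sum_power_mlen_le:
  fixes q :: real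
  assumes "0 \<le> q" "q < 1"
  shows "(\<Sum>\<nu>\<in>{\<nu>::'n::finite \<Rightarrow> nat. mlen \<nu> \<le> D}. q ^ mlen \<nu>) \<le> (1 / (1 - q)) ^ CARD('n)"
proof -
  have "(\<Sum>\<nu>\<in>{\<nu>::'n \<Rightarrow> nat. mlen \<nu> \<le> D}. q ^ mlen \<nu>) \<le> (\<Sum>\<nu>\<in>PiE UNIV (\<lambda>_::'n. {..D}). q ^ mlen \<nu>)"
    by (rule sum_mono2[OF _ mlen_le_subset_PiE]) (use assms in \<open>auto simp: finite_PiE\<close>)
  also have "\<dots> = (\<Sum>\<nu>\<in>PiE UNIV (\<lambda>_::'n. {..D}). \<Prod>k\<in>UNIV. q ^ \<nu> k)"
    by (simp add: prod_power_mlen)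
  also have "\<dots> = (\<Prod>k\<in>(UNIV::'n set). \<Sum>j\<le>D. q ^ j)"
    by (rule prod_sum_PiE[symmetric]) auto
  also have "\<dots> \<le> (\<Prod>k\<in>(UNIV::'n set). 1 / (1 - q))"
  proof (rule prod_mono)
    have "(\<Sum>j\<le>D. q ^ j) = (1 - q ^ Suc D) / (1 - q)"
      using assms by (simp only: lessThan_Suc_atMost[symmetric] sum_gp_strict) simp
    also have "\<dots> \<le> 1 / (1 - q)"
      using assms by (simp add: divide_right_mono)
    finally show "0 \<le> (\<Sum>j\<le>D. q ^ j) \<and> (\<Sum>j\<le>D. q ^ j) \<le> 1 / (1 - q)"
      using assms by (auto intro: sum_nonneg)
  qed
  finally show ?thesis by simp
qed

lemma powr_inverse_less_iff:
  fixes x r :: real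
  assumes "0 \<le> x" "0 \<le> r" "0 < m"
  shows "x powr (1 / real m) < r \<longleftrightarrow> x < r ^ m"
proof -
  have "x powr (1 / real m) < r \<longleftrightarrow> root m x < root m (r ^ m)"
    using assms by (simp only: root_powr_inverse real_root_power_cancel)
  then show ?thesis using assms(3) by simp
qed

lemma norm_abs_poly_eval_le:
  assumes "\<forall>k. norm (z i k) \<le> R"
  shows "norm (abs_poly_eval a d z i) \<le>
     (\<Sum>\<nu>\<in>{\<nu>::'n::finite \<Rightarrow> nat. mlen \<nu> \<le> d i}. norm (a i \<nu>) * R ^ mlen \<nu>)"
proof -
  have "norm (abs_poly_eval a d z i) \<le>
      (\<Sum>\<nu>\<in>{\<nu>::'n \<Rightarrow> nat. mlen \<nu> \<le> d i}. norm (a i \<nu>) * (\<Prod>k\<in>UNIV. norm (z i k) ^ \<nu> k))"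
    unfolding abs_poly_eval_def
    by (rule order_trans[OF norm_sum]) (simp add: norm_mult norm_power flip: prod_norm)
  also have "\<dots> \<le> (\<Sum>\<nu>\<in>{\<nu>::'n \<Rightarrow> nat. mlen \<nu> \<le> d i}. norm (a i \<nu>) * R ^ mlen \<nu>)"
    using assms
    by (intro sum_mono mult_left_mono) (auto simp flip: prod_power_mlen intro!: prod_mono power_mono)
  finally show ?thesis .
qed

lemma norm_abs_poly_eval_const:
  assumes "0 \<le> c"
  shows "norm (abs_poly_eval a d (\<lambda>i k. complex_of_real c) i) =
     (\<Sum>\<nu>\<in>{\<nu>::'n::finite \<Rightarrow> nat. mlen \<nu> \<le> d i}. norm (a i \<nu>) * c ^ mlen \<nu>)"
proof -
  have "abs_poly_eval a d (\<lambda>i k. complex_of_real c) i = complex_of_real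
     (\<Sum>\<nu>\<in>{\<nu>::'n \<Rightarrow> nat. mlen \<nu> \<le> d i}. norm (a i \<nu>) * c ^ mlen \<nu>)"
    unfolding abs_poly_eval_def by (simp add: prod_power_mlen flip: of_real_power of_real_prod)
  moreover have "0 \<le> (\<Sum>\<nu>\<in>{\<nu>::'n \<Rightarrow> nat. mlen \<nu> \<le> d i}. norm (a i \<nu>) * c ^ mlen \<nu>)"
    using assms by (simp add: sum_nonneg)
  ultimately show ?thesis by (simp only: norm_of_real abs_of_nonneg)
qed

lemma coeff_le_abs_poly_eval_const:
  fixes a :: "'i \<Rightarrow> ('n::finite \<Rightarrow> nat) \<Rightarrow> complex"
  assumes "0 \<le> c" "mlen \<nu> \<le> d i"
  shows "norm (a i \<nu>) * c ^ mlen \<nu> \<le> norm (abs_poly_eval a d (\<lambda>i k. complex_of_real c) i)"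
  unfolding norm_abs_poly_eval_const[OF assms(1)]
  by (rule member_le_sum) (use assms finite_mlen_le in auto)

lemma abs_bounded_imp_limited_const:
  assumes "abs_bounded U a d"
  shows "limited U (abs_poly_eval a d (\<lambda>i k. complex_of_real c))"
proof -
  have "limited U (\<lambda>i. complex_of_real c)" unfolding limited_def by (auto intro: exI[of _ "\<bar>c\<bar>"])
  then show ?thesis using assms unfolding abs_bounded_def by simp
qed

lemma ultrafilter_not_eventually:
  assumes "ultrafilter U" "\<not> eventually P U"
  shows "eventually (\<lambda>x. \<not> P x) U"
  using assms unfolding ultrafilter_def by blast

lemma ultrafilter_not_eventually_False: "ultrafilter U \<Longrightarrow> \<not> eventually (\<lambda>x. False) U"
  unfolding ultrafilter_def by (simp add: eventually_False)

lemma limited_uniform_bound: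
  assumes "\<forall>k::'n::finite. limited U (\<lambda>i. z i k)"
  obtains R where "0 < R" "eventually (\<lambda>i. \<forall>k. norm (z i k) \<le> R) U"
proof -
  from assms obtain Rk where Rk: "\<And>k. eventually (\<lambda>i. norm (z i k) \<le> Rk k) U"
    unfolding limited_def by metis
  define R where "R = 1 + (\<Sum>k\<in>UNIV. \<bar>Rk k\<bar>)"
  have "Rk k \<le> R" for k
    using member_le_sum[of k UNIV "\<lambda>k. \<bar>Rk k\<bar>"] unfolding R_def by auto
  then have "eventually (\<lambda>i. \<forall>k. norm (z i k) \<le> R) U"
    by (intro eventually_all_finite allI eventually_mono[OF Rk]) (blast intro: order_trans)
  moreover have "0 < R" unfolding R_def by (simp add: add_pos_nonneg sum_nonneg)
  ultimately show ?thesis using that by blast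
qed

text \<open>The overspill principle: choosing in each coordinate a witness of maximal size yields a
witness of infinite size.\<close>

lemma hyp_infinite_witnessE:
  fixes g :: "'a \<Rightarrow> nat"
  assumes unbounded: "\<And>N. eventually (\<lambda>i. \<exists>x. N \<le> g x \<and> Q i x) U"
    and bounded: "\<And>i x. Q i x \<Longrightarrow> g x \<le> b i"
  obtains \<xi> where "hyp_infinite U (\<lambda>i. g (\<xi> i))" "eventually (\<lambda>i. Q i (\<xi> i)) U"
proof -
  define \<xi> where "\<xi> i = (SOME x. Q i x \<and> (\<forall>y. Q i y \<longrightarrow> g y \<le> g x))" for i
  have maximal: "Q i (\<xi> i) \<and> g x \<le> g (\<xi> i)" if "Q i x" for i x
  proof -
    have "\<exists>x. Q i x \<and> (\<forall>y. Q i y \<longrightarrow> g y \<le> g x)"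
      using that bounded by (intro ex_has_greatest_nat[where b = "Suc (b i)"]) (auto simp: le_imp_less_Suc)
    then have "Q i (\<xi> i) \<and> (\<forall>y. Q i y \<longrightarrow> g y \<le> g (\<xi> i))"
      unfolding \<xi>_def by (rule someI_ex)
    then show ?thesis using that by blast
  qed
  have "hyp_infinite U (\<lambda>i. g (\<xi> i))"
    unfolding hyp_infinite_def
  proof
    fix N
    show "eventually (\<lambda>i. N < g (\<xi> i)) U"
      by (rule eventually_mono[OF unbounded[of "Suc N"]]) (use maximal in \<open>fastforce simp: Suc_le_eq\<close>)
  qed
  moreover have "eventually (\<lambda>i. Q i (\<xi> i)) U"
    by (rule eventually_mono[OF unbounded[of 0]]) (use maximal in blast)
  ultimately show ?thesis using that by blast
qed

definition coeff_roots_infinitesimal ::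
  "'i filter \<Rightarrow> ('i \<Rightarrow> ('n::finite \<Rightarrow> nat) \<Rightarrow> complex) \<Rightarrow> ('i \<Rightarrow> nat) \<Rightarrow> bool" where
  "coeff_roots_infinitesimal U a d \<longleftrightarrow>
     (\<forall>\<nu>::'i \<Rightarrow> 'n \<Rightarrow> nat. hyp_infinite U (\<lambda>i. mlen (\<nu> i)) \<longrightarrow>
        eventually (\<lambda>i. mlen (\<nu> i) \<le> d i) U \<longrightarrow>
        infinitesimal U (\<lambda>i. complex_of_real (norm (a i (\<nu> i)) powr (1 / real (mlen (\<nu> i))))))"

lemma coeff_roots_infinitesimal_uniform:
  assumes U: "ultrafilter U" and roots: "coeff_roots_infinitesimal U a d" and "0 < r"
  obtains N where "eventually (\<lambda>i. \<forall>\<nu>. N \<le> mlen \<nu> \<and> mlen \<nu> \<le> d i \<longrightarrow>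
     norm (a i \<nu>) powr (1 / real (mlen \<nu>)) < r) U"
proof (rule ccontr)
  define Q where "Q i \<nu> \<longleftrightarrow> mlen \<nu> \<le> d i \<and> \<not> norm (a i \<nu>) powr (1 / real (mlen \<nu>)) < r" for i \<nu>
  assume "\<not> thesis"
  then have "eventually (\<lambda>i. \<exists>\<nu>. N \<le> mlen \<nu> \<and> Q i \<nu>) U" for N
    using that ultrafilter_not_eventually[OF U] unfolding Q_def by (fastforce elim: eventually_mono)
  then obtain \<xi> where infinite: "hyp_infinite U (\<lambda>i. mlen (\<xi> i))" and Q: "eventually (\<lambda>i. Q i (\<xi> i)) U"
    by (rule hyp_infinite_witnessE[where b = d]) (auto simp: Q_def)
  have "eventually (\<lambda>i. mlen (\<xi> i) \<le> d i) U"
    using Q by (rule eventually_mono) (simp add: Q_def)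
  with infinite roots have "eventually (\<lambda>i. norm (a i (\<xi> i)) powr (1 / real (mlen (\<xi> i))) < r) U"
    using \<open>0 < r\<close> unfolding coeff_roots_infinitesimal_def infinitesimal_def by auto
  with Q have "eventually (\<lambda>i. False) U"
    by eventually_elim (simp add: Q_def)
  then show False using ultrafilter_not_eventually_False[OF U] by blast
qed

lemma coeff_roots_infinitesimal_power_bound:
  fixes a :: "'i \<Rightarrow> ('n::finite \<Rightarrow> nat) \<Rightarrow> complex"
  assumes "ultrafilter U" and "coeff_roots_infinitesimal U a d" and "0 < r"
  obtains N where "eventually (\<lambda>i. \<forall>\<nu>. N \<le> mlen \<nu> \<and> mlen \<nu> \<le> d i \<longrightarrow>
     norm (a i \<nu>) \<le> r ^ mlen \<nu>) U"
proof -
  obtain N0 where N0: "eventually (\<lambda>i. \<forall>\<nu>. N0 \<le> mlen \<nu> \<and> mlen \<nu> \<le> d i \<longrightarrow>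
      norm (a i \<nu>) powr (1 / real (mlen \<nu>)) < r) U"
    using coeff_roots_infinitesimal_uniform[OF assms] by blast
  define N where "N = max N0 1"
  have "eventually (\<lambda>i. \<forall>\<nu>. N \<le> mlen \<nu> \<and> mlen \<nu> \<le> d i \<longrightarrow> norm (a i \<nu>) \<le> r ^ mlen \<nu>) U"
    using N0
  proof eventually_elim
    case (elim i)
    show ?case
    proof (intro allI impI)
      fix \<nu> :: "'n \<Rightarrow> nat"
      assume "N \<le> mlen \<nu> \<and> mlen \<nu> \<le> d i"
      then have "norm (a i \<nu>) powr (1 / real (mlen \<nu>)) < r" "0 < mlen \<nu>"
        using elim by (auto simp: N_def)
      then show "norm (a i \<nu>) \<le> r ^ mlen \<nu>"
        using powr_inverse_less_iff[of "norm (a i \<nu>)" r "mlen \<nu>"] \<open>0 < r\<close> by simp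
    qed
  qed
  then show ?thesis by (rule that)
qed

lemma abs_bounded_imp_limited_coeff:
  fixes a :: "'i \<Rightarrow> ('n::finite \<Rightarrow> nat) \<Rightarrow> complex"
  assumes "hyp_infinite U d" "abs_bounded U a d"
  shows "limited U (\<lambda>i. a i \<nu>)"
proof -
  obtain B where B: "eventually (\<lambda>i. norm (abs_poly_eval a d (\<lambda>i k. complex_of_real 1) i) \<le> B) U"
    using abs_bounded_imp_limited_const[OF assms(2)] unfolding limited_def by blast
  have "eventually (\<lambda>i. mlen \<nu> < d i) U"
    using assms(1) unfolding hyp_infinite_def by blast
  with B have "eventually (\<lambda>i. norm (a i \<nu>) \<le> B) U"
  proof eventually_elim
    case (elim i)
    then show ?case using coeff_le_abs_poly_eval_const[of 1 \<nu> d i a] by simp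
  qed
  then show ?thesis unfolding limited_def by blast
qed

lemma abs_bounded_imp_coeff_roots_infinitesimal:
  fixes a :: "'i \<Rightarrow> ('n::finite \<Rightarrow> nat) \<Rightarrow> complex"
  assumes U: "ultrafilter U" and "abs_bounded U a d"
  shows "coeff_roots_infinitesimal U a d"
  unfolding coeff_roots_infinitesimal_def infinitesimal_def
proof (intro allI impI, rule ccontr)
  fix \<nu> :: "'i \<Rightarrow> 'n \<Rightarrow> nat" and r :: real
  assume infinite: "hyp_infinite U (\<lambda>i. mlen (\<nu> i))" and le_d: "eventually (\<lambda>i. mlen (\<nu> i) \<le> d i) U"
    and "0 < r"
  assume "\<not> eventually (\<lambda>i. norm (complex_of_real (norm (a i (\<nu> i)) powr (1 / real (mlen (\<nu> i))))) < r) U"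
  then have large: "eventually (\<lambda>i. \<not> norm (a i (\<nu> i)) powr (1 / real (mlen (\<nu> i))) < r) U"
    using ultrafilter_not_eventually[OF U] by simp
  define c where "c = 2 / r"
  have "0 \<le> c" using \<open>0 < r\<close> by (simp add: c_def)
  obtain B where B: "eventually (\<lambda>i. norm (abs_poly_eval a d (\<lambda>i k. complex_of_real c) i) \<le> B) U"
    using abs_bounded_imp_limited_const[OF assms(2)] unfolding limited_def by blast
  have "eventually (\<lambda>i. nat \<lceil>B\<rceil> < mlen (\<nu> i)) U"
    using infinite unfolding hyp_infinite_def by blast
  with B large le_d have "eventually (\<lambda>i. False) U"
  proof eventually_elim
    case (elim i)
    define m where "m = mlen (\<nu> i)"
    have "r ^ m \<le> norm (a i (\<nu> i))"
      using elim powr_inverse_less_iff[of "norm (a i (\<nu> i))" r m] \<open>0 < r\<close> by (simp add: m_def)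
    then have "2 ^ m \<le> norm (a i (\<nu> i)) * c ^ m"
      using \<open>0 < r\<close> \<open>0 \<le> c\<close> by (simp add: c_def power_divide field_simps)
    also have "\<dots> \<le> B"
      using coeff_le_abs_poly_eval_const[OF \<open>0 \<le> c\<close>, of "\<nu> i" d i a] elim by (simp add: m_def)
    finally have "real (2 ^ m) \<le> B" by simp
    moreover have "nat \<lceil>B\<rceil> < m" using elim by (simp add: m_def)
    moreover have "m < 2 ^ m" by (rule less_exp)
    ultimately show False by linarith
  qed
  then show False using ultrafilter_not_eventually_False[OF U] by blast
qed

lemma norm_abs_poly_eval_le_head_tail:
  fixes a :: "'i \<Rightarrow> ('n::finite \<Rightarrow> nat) \<Rightarrow> complex"
  assumes "\<forall>k. norm (z i k) \<le> R" "0 < R"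
    and tail: "\<forall>\<nu>. N \<le> mlen \<nu> \<and> mlen \<nu> \<le> d i \<longrightarrow> norm (a i \<nu>) \<le> (1 / (2 * R)) ^ mlen \<nu>"
  shows "norm (abs_poly_eval a d z i) \<le>
     (\<Sum>\<nu>\<in>{\<nu>. mlen \<nu> < N}. norm (a i \<nu>) * R ^ mlen \<nu>) + 2 ^ CARD('n)"
proof -
  define S where "S = {\<nu>::'n \<Rightarrow> nat. mlen \<nu> \<le> d i}"
  define L where "L = {\<nu>::'n \<Rightarrow> nat. mlen \<nu> < N}"
  define t where "t \<nu> = norm (a i \<nu>) * R ^ mlen \<nu>" for \<nu>
  have "finite S" "finite L"
    unfolding S_def L_def by (rule finite_mlen_le, rule finite_subset[OF _ finite_mlen_le[of N]]) auto
  have t_nonneg: "0 \<le> t \<nu>" for \<nu> using \<open>0 < R\<close> by (simp add: t_def)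
  have "norm (abs_poly_eval a d z i) \<le> sum t S"
    unfolding S_def t_def by (rule norm_abs_poly_eval_le) (rule assms(1))
  also have "\<dots> = sum t (S \<inter> L) + sum t (S - L)"
    by (rule sum.Int_Diff[OF \<open>finite S\<close>])
  also have "sum t (S \<inter> L) \<le> sum t L"
    by (rule sum_mono2[OF \<open>finite L\<close>]) (auto intro: t_nonneg)
  also have "sum t (S - L) \<le> (\<Sum>\<nu>\<in>S. (1 / 2 :: real) ^ mlen \<nu>)"
  proof -
    have "t \<nu> \<le> (1 / 2) ^ mlen \<nu>" if "\<nu> \<in> S - L" for \<nu>
    proof -
      have "t \<nu> \<le> (1 / (2 * R)) ^ mlen \<nu> * R ^ mlen \<nu>"
        unfolding t_def using tail that \<open>0 < R\<close> by (intro mult_right_mono) (auto simp: S_def L_def)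
      also have "\<dots> = (1 / 2) ^ mlen \<nu>"
        using \<open>0 < R\<close> by (simp flip: power_mult_distrib)
      finally show ?thesis .
    qed
    then have "sum t (S - L) \<le> (\<Sum>\<nu>\<in>S - L. (1 / 2 :: real) ^ mlen \<nu>)"
      by (rule sum_mono)
    also have "\<dots> \<le> (\<Sum>\<nu>\<in>S. (1 / 2 :: real) ^ mlen \<nu>)"
      by (rule sum_mono2[OF \<open>finite S\<close>]) auto
    finally show ?thesis .
  qed
  also have "(\<Sum>\<nu>\<in>S. (1 / 2 :: real) ^ mlen \<nu>) \<le> 2 ^ CARD('n)"
    using sum_power_mlen_le[of "1 / 2" "d i", where 'n = 'n] by (simp add: S_def)
  finally show ?thesis by (simp add: L_def t_def)
qed

lemma abs_boundedI:
  fixes a :: "'i \<Rightarrow> ('n::finite \<Rightarrow> nat) \<Rightarrow> complex"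
  assumes U: "ultrafilter U" and coeffs: "\<forall>\<nu>. limited U (\<lambda>i. a i \<nu>)"
    and roots: "coeff_roots_infinitesimal U a d"
  shows "abs_bounded U a d"
  unfolding abs_bounded_def
proof (intro allI impI)
  fix z :: "'i \<Rightarrow> 'n \<Rightarrow> complex"
  assume "\<forall>k. limited U (\<lambda>i. z i k)"
  then obtain R where "0 < R" and z_bound: "eventually (\<lambda>i. \<forall>k. norm (z i k) \<le> R) U"
    by (rule limited_uniform_bound)
  define r where "r = 1 / (2 * R)"
  have "0 < r" using \<open>0 < R\<close> by (simp add: r_def)
  obtain N where tail: "eventually (\<lambda>i. \<forall>\<nu>. N \<le> mlen \<nu> \<and> mlen \<nu> \<le> d i \<longrightarrow>
      norm (a i \<nu>) \<le> r ^ mlen \<nu>) U"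
    using coeff_roots_infinitesimal_power_bound[OF U roots \<open>0 < r\<close>] by blast
  define L where "L = {\<nu>::'n \<Rightarrow> nat. mlen \<nu> < N}"
  have "finite L"
    unfolding L_def by (rule finite_subset[OF _ finite_mlen_le[of N]]) auto
  from coeffs obtain B where B: "\<And>\<nu>. eventually (\<lambda>i. norm (a i \<nu>) \<le> B \<nu>) U"
    unfolding limited_def by metis
  have head: "eventually (\<lambda>i. \<forall>\<nu>\<in>L. norm (a i \<nu>) \<le> B \<nu>) U"
    by (rule eventually_ball_finite[OF \<open>finite L\<close>]) (use B in blast)
  have "eventually (\<lambda>i. norm (abs_poly_eval a d z i) \<le> (\<Sum>\<nu>\<in>L. B \<nu> * R ^ mlen \<nu>) + 2 ^ CARD('n)) U"
    using z_bound tail head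
  proof eventually_elim
    case (elim i)
    have "norm (abs_poly_eval a d z i) \<le> (\<Sum>\<nu>\<in>L. norm (a i \<nu>) * R ^ mlen \<nu>) + 2 ^ CARD('n)"
      unfolding L_def using elim(1) \<open>0 < R\<close> elim(2)[unfolded r_def] by (rule norm_abs_poly_eval_le_head_tail)
    also have "(\<Sum>\<nu>\<in>L. norm (a i \<nu>) * R ^ mlen \<nu>) \<le> (\<Sum>\<nu>\<in>L. B \<nu> * R ^ mlen \<nu>)"
      using elim(3) \<open>0 < R\<close> by (intro sum_mono mult_right_mono) auto
    finally show ?case by simp
  qed
  then show "limited U (abs_poly_eval a d z)" unfolding limited_def by blast
qed

theorem proposition1p4p2:
  fixes U :: "'i filter"
    and a :: "'i \<Rightarrow> ('n::finite \<Rightarrow> nat) \<Rightarrow> complex"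
    and d :: "'i \<Rightarrow> nat"
  assumes "ultrafilter U" and "nonprincipal U"
    and "hyp_infinite U d"
  shows "abs_bounded U a d \<longleftrightarrow>
     ((\<forall>\<nu>::'n \<Rightarrow> nat. limited U (\<lambda>i. a i \<nu>)) \<and>
      (\<forall>\<nu>::'i \<Rightarrow> 'n \<Rightarrow> nat. hyp_infinite U (\<lambda>i. mlen (\<nu> i)) \<longrightarrow>
          eventually (\<lambda>i. mlen (\<nu> i) \<le> d i) U \<longrightarrow>
          infinitesimal U (\<lambda>i. complex_of_real (norm (a i (\<nu> i)) powr (1 / real (mlen (\<nu> i)))))))"
  using abs_bounded_imp_limited_coeff[OF assms(3)]
    abs_bounded_imp_coeff_roots_infinitesimal[OF assms(1)] abs_boundedI[OF assms(1)]
  unfolding coeff_roots_infinitesimal_def by blast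

end
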